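(* Let $X$ be a Hausdorff locally compact space. If $X$ is homeomorphic to the topological coproduct of an infinite family of compact spaces, then $X$ has infinitely many pairwise non-equivalent compactifications.
   Context: A compactification of $X$ is a compact Hausdorff space containing $X$ as a dense subspace; two compactifications are equivalent if there is a homeomorphism between them restricting to the identity on $X$. *)

theory Defs
  imports "HOL-Analysis.Analysis"
begin

definition compactification :: "'a topology \<Rightarrow> 'b topology \<Rightarrow> ('a \<Rightarrow> 'b) \<Rightarrow> bool" where
  "compactification X Y e \<longleftrightarrow>
     compact_space Y \<and> Hausdorff_space Y \<and> embedding_map X Y e \<and>
     Y closure_of (e ` topspace X) = topspace Y"

definition equivalent_compactifications ::
  "'a topology \<Rightarrow> 'b topology \<Rightarrow> ('a \<Rightarrow> 'b) \<Rightarrow> 'c topology \<Rightarrow> ('a \<Rightarrow> 'c) \<Rightarrow> bool" where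
  "equivalent_compactifications X Y1 e1 Y2 e2 \<longleftrightarrow>
     (\<exists>h. homeomorphic_map Y1 Y2 h \<and> (\<forall>x\<in>topspace X. h (e1 x) = e2 x))"

end

theory Submission
  imports Defs
begin

text \<open>Split the infinitely many summands into \<open>n + 1\<close> infinite families. The corresponding
  \<open>n + 1\<close> pieces of \<open>X\<close> are open, closed and not compact. Adding to each piece \<open>C\<close> one point at
  infinity, whose neighbourhoods are the open sets containing all of \<open>C\<close> except a compact set,
  yields a compactification whose remainder has exactly \<open>n + 1\<close> points. An equivalence of
  compactifications restricts to a bijection between their remainders, so these compactifications
  are pairwise inequivalent.\<close>

lemma infinite_imp_infinite_fibres:
  assumes "infinite I"
  obtains c :: "'i \<Rightarrow> nat" where "\<And>i. c i \<le> n" and "\<And>j. j \<le> n \<Longrightarrow> infinite {i\<in>I. c i = j}"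
proof -
  obtain g :: "nat \<Rightarrow> 'i" where g: "inj g" "range g \<subseteq> I"
    using infinite_countable_subset assms by blast
  define c where "c i = (if i \<in> range g then inv g i mod Suc n else 0)" for i
  have "c i \<le> n" for i
    by (simp add: c_def less_Suc_eq_le)
  moreover have "infinite {i\<in>I. c i = j}" if "j \<le> n" for j
  proof -
    have "c (g k) = k mod Suc n" for k
      by (simp add: c_def inv_f_f[OF g(1)])
    moreover have "(j + m * Suc n) mod Suc n = j" for m
      using that by (metis mod_mult_self1 mod_less le_imp_less_Suc)
    ultimately have "range (\<lambda>m. g (j + m * Suc n)) \<subseteq> {i\<in>I. c i = j}"
      using g(2) by auto
    moreover have "inj (\<lambda>m. g (j + m * Suc n))"
      by (auto simp: inj_def simp del: mult_Suc_right dest!: injD[OF g(1)])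
    ultimately show ?thesis
      using range_inj_infinite finite_subset by blast
  qed
  ultimately show thesis
    using that by blast
qed

lemma openin_sum_topology_Sigma:
  assumes "J \<subseteq> I"
  shows "openin (sum_topology K I) (Sigma J (topspace \<circ> K))"
proof -
  have "{x. (i, x) \<in> Sigma J (topspace \<circ> K)} = (if i \<in> J then topspace (K i) else {})" for i
    by auto
  then show ?thesis
    using assms by (auto simp: openin_sum_topology)
qed

lemma continuous_map_fst_sum_topology:
  "continuous_map (sum_topology K I) (discrete_topology I) fst"
proof -
  have "{p \<in> topspace (sum_topology K I). fst p \<in> U} = Sigma (I \<inter> U) (topspace \<circ> K)" for U
    by auto
  then show ?thesis
    by (auto simp: continuous_map_def openin_sum_topology_Sigma)
qed

lemma not_compactin_sum_topology_Sigma: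
  assumes "infinite J" and "J \<subseteq> I" and "\<And>i. i \<in> J \<Longrightarrow> topspace (K i) \<noteq> {}"
  shows "\<not> compactin (sum_topology K I) (Sigma J (topspace \<circ> K))"
proof
  assume "compactin (sum_topology K I) (Sigma J (topspace \<circ> K))"
  then have "compactin (discrete_topology I) (fst ` Sigma J (topspace \<circ> K))"
    using continuous_map_fst_sum_topology by (rule image_compactin)
  moreover have "fst ` Sigma J (topspace \<circ> K) = J"
    using assms(3) by (auto simp: fst_image_Sigma)
  ultimately show False
    using assms(1) by (simp add: compactin_discrete_topology)
qed

locale open_noncompact_partition =
  fixes X :: "'a topology" and CC :: "'a set set"
  assumes finite_pieces: "finite CC"
    and Union_pieces: "\<Union>CC = topspace X"
    and disjoint_pieces: "pairwise disjnt CC"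
    and openin_piece: "C \<in> CC \<Longrightarrow> openin X C"
    and not_compactin_piece: "C \<in> CC \<Longrightarrow> \<not> compactin X C"
begin

text \<open>A point \<open>x\<close> of \<open>X\<close> is encoded as \<open>{{x}}\<close> and the point at infinity of a piece \<open>C\<close> as \<open>{C}\<close>;
  these never coincide because pieces, unlike singletons, are not compact.\<close>

definition points :: "'a set set set" where
  "points = (\<lambda>x. {{x}}) ` topspace X \<union> (\<lambda>C. {C}) ` CC"

definition trace :: "'a set set set \<Rightarrow> 'a set" where
  "trace W = {x. {{x}} \<in> W}"

definition multipoint_open :: "'a set set set \<Rightarrow> bool" where
  "multipoint_open W \<longleftrightarrow> W \<subseteq> points \<and> openin X (trace W) \<and>
     (\<forall>C\<in>CC. {C} \<in> W \<longrightarrow> compactin X (C - trace W))"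

definition multipoint_compactification :: "'a set set topology" where
  "multipoint_compactification = topology multipoint_open"

lemma points_cases:
  assumes "p \<in> points"
  obtains (point) x where "x \<in> topspace X" and "p = {{x}}"
    | (remainder) C where "C \<in> CC" and "p = {C}"
  using assms unfolding points_def by blast

lemma piece_subset: "C \<in> CC \<Longrightarrow> C \<subseteq> topspace X"
  using Union_pieces by blast

lemma remainder_ne_point: "C \<in> CC \<Longrightarrow> {C} \<noteq> {{x}}"
  using not_compactin_piece[of "{x}"] piece_subset[of "{x}"] by auto

lemma closedin_piece: "C \<in> CC \<Longrightarrow> closedin X C"
proof -
  assume C: "C \<in> CC"
  have "topspace X - C = \<Union>(CC - {C})"
    using Union_pieces disjoint_pieces C by (auto simp: pairwise_def disjnt_def)
  then show ?thesis
    using openin_piece piece_subset[OF C] by (auto simp: closedin_def)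
qed

lemma istopology_multipoint_open: "istopology multipoint_open"
  unfolding istopology_def
proof (intro conjI allI impI)
  fix V W assume V: "multipoint_open V" and W: "multipoint_open W"
  have "trace (V \<inter> W) = trace V \<inter> trace W"
    by (auto simp: trace_def)
  moreover have "C - (trace V \<inter> trace W) = (C - trace V) \<union> (C - trace W)" for C
    by blast
  ultimately show "multipoint_open (V \<inter> W)"
    using V W by (auto simp: multipoint_open_def compactin_Un)
next
  fix \<W> assume \<W>: "\<forall>W\<in>\<W>. multipoint_open W"
  have trace_Union: "trace (\<Union>\<W>) = (\<Union>W\<in>\<W>. trace W)"
    by (auto simp: trace_def)
  have "compactin X (C - trace (\<Union>\<W>))" if C: "C \<in> CC" "{C} \<in> W" "W \<in> \<W>" for C W
  proof -
    have "compactin X ((C - trace W) \<inter> (topspace X - trace (\<Union>\<W>)))"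
      using \<W> C by (intro compact_Int_closedin) (auto simp: multipoint_open_def trace_Union)
    moreover have "(C - trace W) \<inter> (topspace X - trace (\<Union>\<W>)) = C - trace (\<Union>\<W>)"
      using piece_subset[OF C(1)] C(3) by (auto simp: trace_def)
    ultimately show ?thesis
      by simp
  qed
  then show "multipoint_open (\<Union>\<W>)"
    using \<W> by (auto simp: multipoint_open_def trace_Union)
qed

lemma openin_multipoint_compactification:
  "openin multipoint_compactification = multipoint_open"
  by (simp add: multipoint_compactification_def istopology_multipoint_open)

lemma trace_points: "trace points = topspace X"
  using piece_subset by (auto simp: trace_def points_def)

lemma topspace_multipoint_compactification: "topspace multipoint_compactification = points"
proof -
  have "multipoint_open points"
    using piece_subset
    by (simp add: multipoint_open_def trace_points Diff_eq_empty_iff[THEN iffD2])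
  then show ?thesis
    unfolding topspace_def openin_multipoint_compactification
    by (auto simp: multipoint_open_def)
qed

lemma trace_image_points: "U \<subseteq> topspace X \<Longrightarrow> trace ((\<lambda>x. {{x}}) ` U) = U"
  by (auto simp: trace_def)

lemma openin_multipoint_image:
  assumes "openin X U"
  shows "openin multipoint_compactification ((\<lambda>x. {{x}}) ` U)"
proof -
  have "U \<subseteq> topspace X"
    using assms by (rule openin_subset)
  then show ?thesis
    using assms remainder_ne_point
    by (auto simp: openin_multipoint_compactification multipoint_open_def points_def trace_image_points)
qed

lemma openin_multipoint_piece:
  assumes C: "C \<in> CC"
  shows "openin multipoint_compactification (insert {C} ((\<lambda>x. {{x}}) ` C))"
    (is "openin _ ?W")
  unfolding openin_multipoint_compactification multipoint_open_def
proof (intro conjI ballI impI)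
  have trace_W: "trace ?W = C"
    using remainder_ne_point[OF C] by (auto simp: trace_def)
  show "?W \<subseteq> points"
    using C piece_subset[OF C] by (auto simp: points_def)
  show "openin X (trace ?W)"
    using openin_piece[OF C] trace_W by simp
  fix D assume "D \<in> CC" and "{D} \<in> ?W"
  then have "D = C"
    using remainder_ne_point by auto
  then show "compactin X (D - trace ?W)"
    using trace_W by simp
qed

lemma openin_multipoint_Diff_compact:
  assumes "Hausdorff_space X" and K: "compactin X K"
  shows "openin multipoint_compactification (points - (\<lambda>x. {{x}}) ` K)"
    (is "openin _ ?W")
  unfolding openin_multipoint_compactification multipoint_open_def
proof (intro conjI ballI impI)
  have trace_W: "trace ?W = topspace X - K"
    using remainder_ne_point by (auto simp: trace_def points_def)
  show "?W \<subseteq> points"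
    by blast
  show "openin X (trace ?W)"
    using compactin_imp_closedin[OF assms] trace_W by (simp add: closedin_def)
  fix D assume D: "D \<in> CC"
  then have "D - trace ?W = D \<inter> K"
    using piece_subset[OF D] trace_W by blast
  then show "compactin X (D - trace ?W)"
    using closed_Int_compactin[OF closedin_piece[OF D] K] by simp
qed

lemma continuous_map_multipoint: "continuous_map X multipoint_compactification (\<lambda>x. {{x}})"
  unfolding continuous_map_def
proof (intro conjI allI impI)
  show "(\<lambda>x. {{x}}) \<in> topspace X \<rightarrow> topspace multipoint_compactification"
    by (auto simp: topspace_multipoint_compactification points_def)
  fix W assume "openin multipoint_compactification W"
  then have "multipoint_open W"
    by (simp add: openin_multipoint_compactification)
  moreover have "{x \<in> topspace X. {{x}} \<in> W} = trace W" if "multipoint_open W"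
    using that trace_points by (auto simp: multipoint_open_def trace_def)
  ultimately show "openin X {x \<in> topspace X. {{x}} \<in> W}"
    by (simp add: multipoint_open_def)
qed

lemma embedding_map_multipoint: "embedding_map X multipoint_compactification (\<lambda>x. {{x}})"
proof (rule injective_open_imp_embedding_map[OF continuous_map_multipoint])
  show "open_map X multipoint_compactification (\<lambda>x. {{x}})"
    by (simp add: open_map_def openin_multipoint_image)
  show "inj_on (\<lambda>x. {{x}}) (topspace X)"
    by (simp add: inj_on_def)
qed

lemma closure_of_image_multipoint:
  "multipoint_compactification closure_of ((\<lambda>x. {{x}}) ` topspace X) =
     topspace multipoint_compactification"
proof -
  have "{C} \<in> multipoint_compactification closure_of ((\<lambda>x. {{x}}) ` topspace X)"
    if C: "C \<in> CC" for C
    unfolding in_closure_of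
  proof (intro conjI allI impI)
    show "{C} \<in> topspace multipoint_compactification"
      using C by (simp add: topspace_multipoint_compactification points_def)
    fix W assume W: "{C} \<in> W \<and> openin multipoint_compactification W"
    then have "compactin X (C - trace W)"
      using C by (auto simp: openin_multipoint_compactification multipoint_open_def)
    moreover have "C - trace W = C" if "C \<inter> trace W = {}"
      using that by blast
    ultimately have "C \<inter> trace W \<noteq> {}"
      using not_compactin_piece[OF C] by force
    then show "\<exists>y. y \<in> (\<lambda>x. {{x}}) ` topspace X \<and> y \<in> W"
      using piece_subset[OF C] by (auto simp: trace_def)
  qed
  moreover have "(\<lambda>x. {{x}}) ` topspace X \<subseteq>
      multipoint_compactification closure_of ((\<lambda>x. {{x}}) ` topspace X)"
    by (rule closure_of_subset) (simp add: topspace_multipoint_compactification points_def)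
  ultimately have "points \<subseteq> multipoint_compactification closure_of ((\<lambda>x. {{x}}) ` topspace X)"
    unfolding points_def by blast
  then show ?thesis
    using closure_of_subset_topspace[of multipoint_compactification]
    unfolding topspace_multipoint_compactification by (rule subset_antisym[rotated])
qed

lemma remainder_multipoint:
  "topspace multipoint_compactification - (\<lambda>x. {{x}}) ` topspace X = (\<lambda>C. {C}) ` CC"
  using remainder_ne_point by (auto simp: topspace_multipoint_compactification points_def)

lemma card_remainder_multipoint:
  "card (topspace multipoint_compactification - (\<lambda>x. {{x}}) ` topspace X) = card CC"
  unfolding remainder_multipoint by (simp add: card_image)

lemma compactin_multipoint_Diff_open:
  assumes "openin multipoint_compactification W" and "\<And>C. C \<in> CC \<Longrightarrow> {C} \<in> W"
  shows "compactin multipoint_compactification (points - W)"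
proof -
  have "compactin X (\<Union>C\<in>CC. C - trace W)"
    using assms finite_pieces
    by (intro compactin_Union) (auto simp: openin_multipoint_compactification multipoint_open_def)
  moreover have "(\<Union>C\<in>CC. C - trace W) = topspace X - trace W"
    using Union_pieces by blast
  moreover have "points - W = (\<lambda>x. {{x}}) ` (topspace X - trace W)"
    using assms(2) by (auto simp: points_def trace_def)
  ultimately show ?thesis
    using image_compactin[OF _ continuous_map_multipoint] by simp
qed

lemma compact_space_multipoint: "compact_space multipoint_compactification"
  unfolding compact_space_alt topspace_multipoint_compactification
proof (intro allI impI)
  fix \<U> assume "(\<forall>U\<in>\<U>. openin multipoint_compactification U) \<and> points \<subseteq> \<Union>\<U>"
  then have open_\<U>: "\<And>U. U \<in> \<U> \<Longrightarrow> openin multipoint_compactification U"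
    and cover: "points \<subseteq> \<Union>\<U>"
    by simp_all
  have "\<forall>C\<in>CC. \<exists>U. U \<in> \<U> \<and> {C} \<in> U"
  proof
    fix C assume "C \<in> CC"
    then have "{C} \<in> points"
      by (simp add: points_def)
    then show "\<exists>U. U \<in> \<U> \<and> {C} \<in> U"
      using cover by blast
  qed
  then have "\<exists>W. \<forall>C\<in>CC. W C \<in> \<U> \<and> {C} \<in> W C"
    by (rule bchoice)
  then obtain W where W: "\<And>C. C \<in> CC \<Longrightarrow> W C \<in> \<U> \<and> {C} \<in> W C"
    by blast
  have "openin multipoint_compactification (\<Union>(W ` CC))"
    using W open_\<U> by (intro openin_Union) blast
  then have "compactin multipoint_compactification (points - \<Union>(W ` CC))"
    using W by (intro compactin_multipoint_Diff_open) blast+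
  moreover have "points - \<Union>(W ` CC) \<subseteq> \<Union>\<U>"
    using cover by blast
  ultimately have "\<exists>\<V>. finite \<V> \<and> \<V> \<subseteq> \<U> \<and> points - \<Union>(W ` CC) \<subseteq> \<Union>\<V>"
    using open_\<U> by (intro compactinD)
  then obtain \<V> where "finite \<V>" "\<V> \<subseteq> \<U>" "points - \<Union>(W ` CC) \<subseteq> \<Union>\<V>"
    by blast
  then show "\<exists>\<F>. finite \<F> \<and> \<F> \<subseteq> \<U> \<and> points \<subseteq> \<Union>\<F>"
    using W finite_pieces by (intro exI[of _ "\<V> \<union> W ` CC"]) auto
qed

lemma multipoint_separate_points:
  assumes "Hausdorff_space X" and "x \<in> topspace X" and "y \<in> topspace X" and "x \<noteq> y"
  shows "\<exists>U V. openin multipoint_compactification U \<and> openin multipoint_compactification V \<and>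
    {{x}} \<in> U \<and> {{y}} \<in> V \<and> disjnt U V"
proof -
  obtain U V where UV: "openin X U" "openin X V" "x \<in> U" "y \<in> V" "disjnt U V"
    using assms unfolding Hausdorff_space_def by blast
  have "disjnt ((\<lambda>x. {{x}}) ` U) ((\<lambda>x. {{x}}) ` V)"
    using UV(5) by (auto simp: disjnt_def)
  then show ?thesis
    using UV openin_multipoint_image
    by (intro exI[of _ "(\<lambda>x. {{x}}) ` U"] exI[of _ "(\<lambda>x. {{x}}) ` V"]) simp
qed

lemma multipoint_separate_point_remainder:
  assumes "Hausdorff_space X" and "locally_compact_space X"
    and x: "x \<in> topspace X" and C: "C \<in> CC"
  shows "\<exists>U V. openin multipoint_compactification U \<and> openin multipoint_compactification V \<and>
    {{x}} \<in> U \<and> {C} \<in> V \<and> disjnt U V"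
proof -
  obtain U K where U: "openin X U" "compactin X K" "x \<in> U" "U \<subseteq> K"
    using assms(2) x unfolding locally_compact_space_def by blast
  have "{C} \<in> points - (\<lambda>x. {{x}}) ` K"
    using C remainder_ne_point[OF C] unfolding points_def by blast
  moreover have "disjnt ((\<lambda>x. {{x}}) ` U) (points - (\<lambda>x. {{x}}) ` K)"
    using U(4) unfolding disjnt_def by blast
  ultimately show ?thesis
    using U(3) openin_multipoint_image[OF U(1)] openin_multipoint_Diff_compact[OF assms(1) U(2)]
    by (intro exI[of _ "(\<lambda>x. {{x}}) ` U"] exI[of _ "points - (\<lambda>x. {{x}}) ` K"]) simp
qed

lemma multipoint_separate_remainder:
  assumes C: "C \<in> CC" and D: "D \<in> CC" and "C \<noteq> D"
  shows "\<exists>U V. openin multipoint_compactification U \<and> openin multipoint_compactification V \<and>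
    {C} \<in> U \<and> {D} \<in> V \<and> disjnt U V"
proof -
  have "disjnt C D"
    using pairwiseD[OF disjoint_pieces C D \<open>C \<noteq> D\<close>] .
  then have "disjnt (insert {C} ((\<lambda>x. {{x}}) ` C)) (insert {D} ((\<lambda>x. {{x}}) ` D))"
    using \<open>C \<noteq> D\<close> remainder_ne_point[OF C] remainder_ne_point[OF D]
    unfolding disjnt_def by auto
  then show ?thesis
    using openin_multipoint_piece[OF C] openin_multipoint_piece[OF D]
    by (intro exI[of _ "insert {C} ((\<lambda>x. {{x}}) ` C)"] exI[of _ "insert {D} ((\<lambda>x. {{x}}) ` D)"])
      simp
qed

lemma Hausdorff_space_multipoint:
  assumes "Hausdorff_space X" and "locally_compact_space X"
  shows "Hausdorff_space multipoint_compactification"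
  unfolding Hausdorff_space_def topspace_multipoint_compactification
proof (intro allI impI)
  fix p q assume pq: "p \<in> points \<and> q \<in> points \<and> p \<noteq> q"
  then have p: "p \<in> points" and q: "q \<in> points"
    by simp_all
  show "\<exists>U V. openin multipoint_compactification U \<and> openin multipoint_compactification V \<and>
      p \<in> U \<and> q \<in> V \<and> disjnt U V"
    using p
  proof (cases rule: points_cases)
    case p_point: (point x)
    show ?thesis
      using q
    proof (cases rule: points_cases)
      case (point y)
      moreover have "x \<noteq> y"
        using pq p_point point by blast
      ultimately show ?thesis
        using p_point multipoint_separate_points[OF assms(1)] by blast
    next
      case (remainder D)
      then show ?thesis
        using p_point multipoint_separate_point_remainder[OF assms] by blast
    qed
  next
    case p_remainder: (remainder C)
    show ?thesis
      using q
    proof (cases rule: points_cases)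
      case (point y)
      then obtain U V where "openin multipoint_compactification U" "openin multipoint_compactification V"
        "{{y}} \<in> U" "{C} \<in> V" "disjnt U V"
        using p_remainder multipoint_separate_point_remainder[OF assms] by blast
      then show ?thesis
        using p_remainder point disjnt_sym by blast
    next
      case (remainder D)
      moreover have "C \<noteq> D"
        using pq p_remainder remainder by blast
      ultimately show ?thesis
        using p_remainder multipoint_separate_remainder by blast
    qed
  qed
qed

lemma compactification_multipoint:
  assumes "Hausdorff_space X" and "locally_compact_space X"
  shows "compactification X multipoint_compactification (\<lambda>x. {{x}})"
  unfolding compactification_def
  by (intro conjI compact_space_multipoint Hausdorff_space_multipoint[OF assms]
      embedding_map_multipoint closure_of_image_multipoint)

end

lemma open_noncompact_partition_homeomorphic_image:
  assumes f: "homeomorphic_map X Y f" and "open_noncompact_partition X CC"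
  shows "open_noncompact_partition Y (image f ` CC)"
proof -
  interpret open_noncompact_partition X CC
    by fact
  have inj: "inj_on f (topspace X)"
    using f by (rule homeomorphic_imp_injective_map)
  show ?thesis
  proof
    show "finite (image f ` CC)"
      using finite_pieces by simp
    show "\<Union>(image f ` CC) = topspace Y"
      using Union_pieces homeomorphic_imp_surjective_map[OF f] by (simp flip: image_Union)
    show "pairwise disjnt (image f ` CC)"
    proof (rule pairwise_imageI)
      fix C D assume C: "C \<in> CC" and D: "D \<in> CC" and "C \<noteq> D"
      then have "C \<inter> D = {}"
        using pairwiseD[OF disjoint_pieces] by (simp add: disjnt_def)
      then show "disjnt (f ` C) (f ` D)"
        using inj_on_image_Int[OF inj piece_subset[OF C] piece_subset[OF D]]
        by (simp add: disjnt_def)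
    qed
    show "openin Y C'" if "C' \<in> image f ` CC" for C'
      using that homeomorphic_map_openness[OF f piece_subset] openin_piece by auto
    show "\<not> compactin Y C'" if "C' \<in> image f ` CC" for C'
      using that homeomorphic_map_compactness[OF f piece_subset] not_compactin_piece by auto
  qed
qed

lemma sum_topology_open_noncompact_partition:
  assumes "infinite I" and "\<And>i. i \<in> I \<Longrightarrow> topspace (K i) \<noteq> {}"
  obtains CC where "open_noncompact_partition (sum_topology K I) CC" and "card CC = Suc n"
proof -
  obtain c where c: "\<And>i. c i \<le> n" "\<And>j. j \<le> n \<Longrightarrow> infinite {i\<in>I. c i = j}"
    using infinite_imp_infinite_fibres[OF assms(1)] by blast
  define P where "P j = Sigma {i\<in>I. c i = j} (topspace \<circ> K)" for j
  have P_disjoint: "P j \<inter> P k = {}" if "j \<noteq> k" for j k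
    using that by (auto simp: P_def)
  have "open_noncompact_partition (sum_topology K I) (P ` {..n})"
  proof
    show "finite (P ` {..n})"
      by simp
    show "\<Union>(P ` {..n}) = topspace (sum_topology K I)"
      using c(1) by (auto simp: P_def)
    show "pairwise disjnt (P ` {..n})"
      using P_disjoint by (intro pairwise_imageI) (auto simp: disjnt_def)
    show "openin (sum_topology K I) C" if "C \<in> P ` {..n}" for C
      using that by (auto simp: P_def intro: openin_sum_topology_Sigma)
    show "\<not> compactin (sum_topology K I) C" if C: "C \<in> P ` {..n}" for C
    proof -
      obtain j where "j \<le> n" and "C = P j"
        using C by auto
      have "\<not> compactin (sum_topology K I) (P j)"
        unfolding P_def using c(2)[OF \<open>j \<le> n\<close>] assms(2)
        by (intro not_compactin_sum_topology_Sigma) auto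
      then show ?thesis
        using \<open>C = P j\<close> by simp
    qed
  qed
  moreover have "inj_on P {..n}"
  proof (rule inj_onI)
    fix j k assume "j \<in> {..n}" "k \<in> {..n}" "P j = P k"
    moreover have "P j \<noteq> {}" if j: "j \<le> n" for j
    proof -
      obtain i where "i \<in> I" "c i = j"
        using not_finite_existsD[OF c(2)[OF j]] by blast
      moreover obtain a where "a \<in> topspace (K i)"
        using assms(2)[OF \<open>i \<in> I\<close>] by blast
      ultimately have "(i, a) \<in> P j"
        by (simp add: P_def)
      then show ?thesis
        by blast
    qed
    ultimately show "j = k"
      using P_disjoint by fastforce
  qed
  then have "card (P ` {..n}) = Suc n"
    by (simp add: card_image)
  ultimately show thesis
    using that by blast
qed

lemma homeomorphic_coproduct_open_noncompact_partition:
  assumes "X homeomorphic_space sum_topology K I" and "infinite I"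
    and "\<And>i. i \<in> I \<Longrightarrow> topspace (K i) \<noteq> {}"
  obtains CC where "open_noncompact_partition X CC" and "card CC = Suc n"
proof -
  obtain f where f: "homeomorphic_map (sum_topology K I) X f"
    using assms(1) homeomorphic_space_sym unfolding homeomorphic_space by blast
  obtain CC where CC: "open_noncompact_partition (sum_topology K I) CC" "card CC = Suc n"
    by (rule sum_topology_open_noncompact_partition[of I K, OF assms(2,3)])
  have "CC \<subseteq> Pow (topspace (sum_topology K I))"
    using open_noncompact_partition.piece_subset[OF CC(1)] by blast
  then have "card (image f ` CC) = card CC"
    using inj_on_image_Pow[OF homeomorphic_imp_injective_map[OF f]]
    by (simp add: card_image inj_on_subset)
  then show thesis
    using that open_noncompact_partition_homeomorphic_image[OF f CC(1)] CC(2) by simp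
qed

lemma card_remainder_equivalent_compactifications:
  assumes "compactification X Y1 e1" and "equivalent_compactifications X Y1 e1 Y2 e2"
  shows "card (topspace Y1 - e1 ` topspace X) = card (topspace Y2 - e2 ` topspace X)"
proof -
  obtain h where h: "homeomorphic_map Y1 Y2 h" and he: "\<And>x. x \<in> topspace X \<Longrightarrow> h (e1 x) = e2 x"
    using assms(2) unfolding equivalent_compactifications_def by blast
  have inj: "inj_on h (topspace Y1)"
    using h by (rule homeomorphic_imp_injective_map)
  have "e1 ` topspace X \<subseteq> topspace Y1"
    using assms(1) unfolding compactification_def embedding_map_def
    by (metis homeomorphic_imp_surjective_map topspace_subtopology Int_lower1)
  then have "h ` (topspace Y1 - e1 ` topspace X) = h ` topspace Y1 - h ` e1 ` topspace X"
    using inj by (simp add: inj_on_image_set_diff)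
  also have "\<dots> = topspace Y2 - e2 ` topspace X"
    using homeomorphic_imp_surjective_map[OF h] he by (simp add: image_image)
  finally show ?thesis
    using inj by (metis card_image inj_on_subset Diff_subset)
qed

theorem mainTheorem6:
  fixes X :: "'a topology" and K :: "'i \<Rightarrow> 'c topology" and I :: "'i set"
  assumes "Hausdorff_space X" and "locally_compact_space X"
    and "infinite I"
    and "\<forall>i\<in>I. compact_space (K i) \<and> topspace (K i) \<noteq> {}"
    and "X homeomorphic_space sum_topology K I"
  shows "\<exists>C :: nat \<Rightarrow> ('a set set) topology \<times> ('a \<Rightarrow> 'a set set).
           (\<forall>n. compactification X (fst (C n)) (snd (C n))) \<and>
           (\<forall>m n. m \<noteq> n \<longrightarrow>
              \<not> equivalent_compactifications X (fst (C m)) (snd (C m)) (fst (C n)) (snd (C n)))"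
proof -
  have "\<forall>n. \<exists>CC. open_noncompact_partition X CC \<and> card CC = Suc n"
    using homeomorphic_coproduct_open_noncompact_partition[OF assms(5,3)] assms(4) by metis
  then obtain P where P: "\<And>n. open_noncompact_partition X (P n)" "\<And>n. card (P n) = Suc n"
    by metis
  define C where "C n = (open_noncompact_partition.multipoint_compactification X (P n), \<lambda>x::'a. {{x}})"
    for n
  have compactification: "compactification X (fst (C n)) (snd (C n))" for n
    using open_noncompact_partition.compactification_multipoint[OF P(1) assms(1,2)]
    by (simp add: C_def)
  have remainder: "card (topspace (fst (C n)) - snd (C n) ` topspace X) = Suc n" for n
    using open_noncompact_partition.card_remainder_multipoint[OF P(1)] P(2)
    by (simp add: C_def)
  show ?thesis
  proof (intro exI[of _ C] conjI allI impI)
    fix m n :: nat assume "m \<noteq> n"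
    then show "\<not> equivalent_compactifications X (fst (C m)) (snd (C m)) (fst (C n)) (snd (C n))"
      using card_remainder_equivalent_compactifications[OF compactification] remainder
      by (metis Suc_inject)
  qed (rule compactification)
qed

end
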